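(* Every flat ado-semilattice is simple, hence subdirectly irreducible.
   Context: A flat ado-semilattice is an algebra $(S,\sqcup,\cap)$ with an element $0\in S$ such that $a\cap a=a$, $0\cap a=a\cap 0=0$ for all $a$, $a\cap b=0$ for distinct $a,b$, $0\sqcup a=a$ for all $a$, and $a\sqcup b=a$ whenever $a\neq 0$ (so the order is flat: $0$ is least and all other elements are maximal). An algebra is simple if every homomorphism from it into an algebra of the same type is either injective or constant. *)

theory Defs
  imports Main
begin

definition algebra22 :: "'a set \<Rightarrow> ('a \<Rightarrow> 'a \<Rightarrow> 'a) \<Rightarrow> ('a \<Rightarrow> 'a \<Rightarrow> 'a) \<Rightarrow> bool" where
  "algebra22 S jn mt \<longleftrightarrow> (\<forall>a\<in>S. \<forall>b\<in>S. jn a b \<in> S \<and> mt a b \<in> S)"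

definition flat_ado_semilattice ::
  "'a set \<Rightarrow> ('a \<Rightarrow> 'a \<Rightarrow> 'a) \<Rightarrow> ('a \<Rightarrow> 'a \<Rightarrow> 'a) \<Rightarrow> 'a \<Rightarrow> bool" where
  "flat_ado_semilattice S jn mt z \<longleftrightarrow>
     algebra22 S jn mt \<and> z \<in> S \<and>
     (\<forall>a\<in>S. mt a a = a) \<and>
     (\<forall>a\<in>S. mt z a = z \<and> mt a z = z) \<and>
     (\<forall>a\<in>S. \<forall>b\<in>S. a \<noteq> b \<longrightarrow> mt a b = z) \<and>
     (\<forall>a\<in>S. jn z a = a) \<and>
     (\<forall>a\<in>S. \<forall>b\<in>S. a \<noteq> z \<longrightarrow> jn a b = a)"

definition hom22 ::
  "'a set \<Rightarrow> ('a \<Rightarrow> 'a \<Rightarrow> 'a) \<Rightarrow> ('a \<Rightarrow> 'a \<Rightarrow> 'a) \<Rightarrow>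
   'b set \<Rightarrow> ('b \<Rightarrow> 'b \<Rightarrow> 'b) \<Rightarrow> ('b \<Rightarrow> 'b \<Rightarrow> 'b) \<Rightarrow> ('a \<Rightarrow> 'b) \<Rightarrow> bool" where
  "hom22 S jn mt T jn' mt' h \<longleftrightarrow>
     (\<forall>a\<in>S. h a \<in> T) \<and>
     (\<forall>a\<in>S. \<forall>b\<in>S. h (jn a b) = jn' (h a) (h b) \<and> h (mt a b) = mt' (h a) (h b))"

definition simple22 ::
  "'b itself \<Rightarrow> 'a set \<Rightarrow> ('a \<Rightarrow> 'a \<Rightarrow> 'a) \<Rightarrow> ('a \<Rightarrow> 'a \<Rightarrow> 'a) \<Rightarrow> bool" where
  "simple22 (_::'b itself) S jn mt \<longleftrightarrow>
     (\<forall>(T::'b set) jn' mt' h. algebra22 T jn' mt' \<and> hom22 S jn mt T jn' mt' h \<longrightarrow>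
        inj_on h S \<or> (\<exists>c. \<forall>a\<in>S. h a = c))"

definition subdirectly_irreducible22 ::
  "'i itself \<Rightarrow> 'b itself \<Rightarrow> 'a set \<Rightarrow> ('a \<Rightarrow> 'a \<Rightarrow> 'a) \<Rightarrow> ('a \<Rightarrow> 'a \<Rightarrow> 'a) \<Rightarrow> bool" where
  "subdirectly_irreducible22 (_::'i itself) (_::'b itself) S jn mt \<longleftrightarrow>
     (\<forall>(I::'i set) (T::'i \<Rightarrow> 'b set) jn' mt' (h::'i \<Rightarrow> 'a \<Rightarrow> 'b).
        I \<noteq> {} \<and>
        (\<forall>i\<in>I. algebra22 (T i) (jn' i) (mt' i) \<and> hom22 S jn mt (T i) (jn' i) (mt' i) (h i)
                \<and> h i ` S = T i) \<and>
        (\<forall>a\<in>S. \<forall>b\<in>S. (\<forall>i\<in>I. h i a = h i b) \<longrightarrow> a = b)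
        \<longrightarrow> (\<exists>i\<in>I. inj_on (h i) S))"

end

theory Submission
  imports Defs
begin

text \<open>A homomorphism \<open>h\<close> identifying distinct \<open>a\<close> and \<open>b\<close> also identifies them with \<open>0\<close>,
  as \<open>h a = h (a \<inter> a) = h (a \<inter> b) = h 0\<close>. One of them, say \<open>a\<close>, is nonzero, and then
  \<open>h x = h (0 \<squnion> x) = h (a \<squnion> x) = h a\<close> for every \<open>x\<close>. Simplicity implies subdirect
  irreducibility because a point-separating family of constant maps forces the carrier to have
  at most one element.\<close>

lemma flat_hom_const_if_merges_zero:
  assumes F: "flat_ado_semilattice S jn mt z"
    and H: "hom22 S jn mt T jn' mt' h"
    and a: "a \<in> S" "a \<noteq> z" "h a = h z"
  shows "\<forall>x\<in>S. h x = h a"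
proof
  fix x assume x: "x \<in> S"
  have zS: "z \<in> S" using F by (simp add: flat_ado_semilattice_def)
  have "h x = h (jn z x)" using F x by (simp add: flat_ado_semilattice_def)
  also have "\<dots> = jn' (h z) (h x)" using H zS x by (simp add: hom22_def)
  also have "\<dots> = jn' (h a) (h x)" using a by simp
  also have "\<dots> = h (jn a x)" using H a x by (simp add: hom22_def)
  also have "\<dots> = h a" using F a x by (simp add: flat_ado_semilattice_def)
  finally show "h x = h a" .
qed

lemma flat_hom_merges_zero_if_merges_distinct:
  assumes F: "flat_ado_semilattice S jn mt z"
    and H: "hom22 S jn mt T jn' mt' h"
    and ab: "a \<in> S" "b \<in> S" "a \<noteq> b" "h a = h b"
  shows "h a = h z"
proof -
  have "h a = h (mt a a)" using F ab by (simp add: flat_ado_semilattice_def)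
  also have "\<dots> = mt' (h a) (h b)" using H ab by (simp add: hom22_def)
  also have "\<dots> = h (mt a b)" using H ab by (simp add: hom22_def)
  also have "\<dots> = h z" using F ab by (simp add: flat_ado_semilattice_def)
  finally show ?thesis .
qed

lemma flat_hom_inj_or_const:
  assumes F: "flat_ado_semilattice S jn mt z"
    and H: "hom22 S jn mt T jn' mt' h"
  shows "inj_on h S \<or> (\<exists>c. \<forall>x\<in>S. h x = c)"
proof (cases "inj_on h S")
  case False
  then obtain a b where ab: "a \<in> S" "b \<in> S" "a \<noteq> b" "h a = h b"
    by (auto simp: inj_on_def)
  have merged: "h a = h z" "h b = h z"
    using flat_hom_merges_zero_if_merges_distinct[OF F H] ab by metis+
  have "a \<noteq> z \<or> b \<noteq> z" using ab by blast
  then show ?thesis using flat_hom_const_if_merges_zero[OF F H] ab merged by blast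
qed simp

lemma flat_ado_semilattice_simple22:
  assumes "flat_ado_semilattice S jn mt z"
  shows "simple22 TYPE('b) S jn mt"
  using flat_hom_inj_or_const[OF assms] by (auto simp: simple22_def)

lemma simple22_imp_subdirectly_irreducible22:
  assumes simple: "simple22 TYPE('b) S jn mt"
  shows "subdirectly_irreducible22 TYPE('i) TYPE('b) S jn mt"
  unfolding subdirectly_irreducible22_def
proof (intro allI impI)
  fix I :: "'i set" and T :: "'i \<Rightarrow> 'b set" and jn' mt' and h :: "'i \<Rightarrow> 'a \<Rightarrow> 'b"
  assume "I \<noteq> {} \<and>
      (\<forall>i\<in>I. algebra22 (T i) (jn' i) (mt' i) \<and> hom22 S jn mt (T i) (jn' i) (mt' i) (h i)
              \<and> h i ` S = T i) \<and>
      (\<forall>a\<in>S. \<forall>b\<in>S. (\<forall>i\<in>I. h i a = h i b) \<longrightarrow> a = b)"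
  then have I: "I \<noteq> {}"
    and homs: "\<And>i. i \<in> I \<Longrightarrow> algebra22 (T i) (jn' i) (mt' i)
                               \<and> hom22 S jn mt (T i) (jn' i) (mt' i) (h i)"
    and separating: "\<And>a b. a \<in> S \<Longrightarrow> b \<in> S \<Longrightarrow> (\<forall>i\<in>I. h i a = h i b) \<Longrightarrow> a = b"
    by blast+
  show "\<exists>i\<in>I. inj_on (h i) S"
  proof (cases "\<exists>i\<in>I. inj_on (h i) S")
    case False
    then have const: "\<exists>c. \<forall>x\<in>S. h i x = c" if "i \<in> I" for i
      using simple homs[OF that] that unfolding simple22_def by blast
    have "a = b" if "a \<in> S" "b \<in> S" for a b
      using separating[OF that] const that by metis
    then have "inj_on (h i) S" for i
      by (auto simp: inj_on_def)
    then show ?thesis using I by blast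
  qed
qed

theorem corollary4p8:
  fixes S :: "'a set" and jn mt :: "'a \<Rightarrow> 'a \<Rightarrow> 'a" and z :: 'a
  assumes "flat_ado_semilattice S jn mt z"
  shows "simple22 TYPE('b) S jn mt \<and> subdirectly_irreducible22 TYPE('i) TYPE('b) S jn mt"
  using flat_ado_semilattice_simple22[OF assms] simple22_imp_subdirectly_irreducible22 by blast

end
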